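(* Let $X,Y$ be Banach spaces, let $-A$ be the generator of a strongly continuous semigroup $(T(t))_{t\ge0}$ on $X$, and let $C:\mathcal D(A)\to Y$ be linear and bounded for the graph norm. If $(A,C)$ is an admissible BFC-system, then the set $\{\operatorname{Re}\lambda:\lambda\in\partial\sigma(A)\}$ is bounded, where $\partial\sigma(A)$ is the boundary of the spectrum of $A$.
   Context: For $\tau\in(0,\infty]$ set $M(\tau)^2:=\sup_{x\in\mathcal D(A),\|x\|=1}\int_0^\tau\|CT(t)x\|_Y^2\,dt$ and $m(\tau)^2:=\inf_{x\in\mathcal D(A),\|x\|=1}\int_0^\tau\|CT(t)x\|_Y^2\,dt$. $C$ is admissible in time $\tau$ if $M(\tau)<\infty$, exactly observable in time $\eta$ if $m(\eta)>0$. $(A,C)$ is a BFC-system if there exist $0<\eta<\tau$ such that $C$ is admissible and exactly observable in time $\tau$ and $M(\eta)<m(\tau)$. *)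

theory Defs
  imports "HOL-Analysis.Analysis"
begin

text \<open>A complex structure on a real Banach space: a complex scalar multiplication
  extending the real one and compatible with the norm.  (HOL-Analysis has no
  class of complex normed spaces, so complex Banach spaces are modelled as
  real Banach spaces together with such a structure.)\<close>
definition complex_structure :: "(complex \<Rightarrow> 'a::real_normed_vector \<Rightarrow> 'a) \<Rightarrow> bool" where
  "complex_structure sc \<longleftrightarrow>
     (\<forall>a x y. sc a (x + y) = sc a x + sc a y) \<and>
     (\<forall>a b x. sc (a + b) x = sc a x + sc b x) \<and>
     (\<forall>a b x. sc a (sc b x) = sc (a * b) x) \<and>
     (\<forall>r x. sc (complex_of_real r) x = r *\<^sub>R x) \<and>
     (\<forall>a x. norm (sc a x) = cmod a * norm x)"

definition complex_linear_map ::
  "(complex \<Rightarrow> 'a::real_normed_vector \<Rightarrow> 'a) \<Rightarrow> (complex \<Rightarrow> 'b::real_normed_vector \<Rightarrow> 'b)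
    \<Rightarrow> ('a \<Rightarrow> 'b) \<Rightarrow> bool" where
  "complex_linear_map scX scY L \<longleftrightarrow> (\<forall>a x. L (scX a x) = scY a (L x))"

definition C0_semigroup ::
  "(complex \<Rightarrow> 'x::banach \<Rightarrow> 'x) \<Rightarrow> (real \<Rightarrow> 'x \<Rightarrow> 'x) \<Rightarrow> bool" where
  "C0_semigroup sc T \<longleftrightarrow>
     (\<forall>t\<ge>0. bounded_linear (T t) \<and> complex_linear_map sc sc (T t)) \<and>
     T 0 = id \<and>
     (\<forall>s\<ge>0. \<forall>t\<ge>0. T (s + t) = T s \<circ> T t) \<and>
     (\<forall>x. ((\<lambda>t. T t x) \<longlongrightarrow> x) (at_right 0))"

definition minus_generator ::
  "(real \<Rightarrow> 'x::banach \<Rightarrow> 'x) \<Rightarrow> 'x set \<Rightarrow> ('x \<Rightarrow> 'x) \<Rightarrow> bool" where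
  "minus_generator T D A \<longleftrightarrow>
     D = {x. \<exists>y. ((\<lambda>h. (1 / h) *\<^sub>R (T h x - x)) \<longlongrightarrow> y) (at_right 0)} \<and>
     (\<forall>x\<in>D. ((\<lambda>h. (1 / h) *\<^sub>R (T h x - x)) \<longlongrightarrow> - A x) (at_right 0))"

definition op_spectrum ::
  "(complex \<Rightarrow> 'x::banach \<Rightarrow> 'x) \<Rightarrow> 'x set \<Rightarrow> ('x \<Rightarrow> 'x) \<Rightarrow> complex set" where
  "op_spectrum sc D A = {l. \<not> (\<exists>R. bounded_linear R \<and>
        (\<forall>y. R y \<in> D \<and> sc l (R y) - A (R y) = y) \<and>
        (\<forall>x\<in>D. R (sc l x - A x) = x))}"

definition obs_energy ::
  "(real \<Rightarrow> 'x \<Rightarrow> 'x) \<Rightarrow> ('x \<Rightarrow> 'y::real_normed_vector) \<Rightarrow> ennreal \<Rightarrow> 'x \<Rightarrow> ennreal" where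
  "obs_energy T C \<tau> x =
     (\<integral>\<^sup>+ t \<in> {t::real. 0 \<le> t \<and> ennreal t < \<tau>}. ennreal ((norm (C (T t x)))\<^sup>2) \<partial>lborel)"

definition M2 :: "(real \<Rightarrow> 'x::real_normed_vector \<Rightarrow> 'x) \<Rightarrow> 'x set \<Rightarrow> ('x \<Rightarrow> 'y::real_normed_vector) \<Rightarrow> ennreal \<Rightarrow> ennreal" where
  "M2 T D C \<tau> = (SUP x\<in>{x\<in>D. norm x = 1}. obs_energy T C \<tau> x)"

definition m2 :: "(real \<Rightarrow> 'x::real_normed_vector \<Rightarrow> 'x) \<Rightarrow> 'x set \<Rightarrow> ('x \<Rightarrow> 'y::real_normed_vector) \<Rightarrow> ennreal \<Rightarrow> ennreal" where
  "m2 T D C \<tau> = (INF x\<in>{x\<in>D. norm x = 1}. obs_energy T C \<tau> x)"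

definition admissible_in where
  "admissible_in T D C \<tau> \<longleftrightarrow> M2 T D C \<tau> < \<infinity>"

definition exactly_observable_in where
  "exactly_observable_in T D C \<tau> \<longleftrightarrow> m2 T D C \<tau> > 0"

definition admissible where
  "admissible T D C \<longleftrightarrow> (\<exists>\<tau>::real. \<tau> > 0 \<and> admissible_in T D C (ennreal \<tau>))"

text \<open>BFC-system: \<open>0 < \<eta> < \<tau> \<le> \<infinity>\<close>, \<open>C\<close> admissible and exactly observable in time \<open>\<tau>\<close>,
  and \<open>M(\<eta>) < m(\<tau>)\<close> (equivalently \<open>M(\<eta>)\<^sup>2 < m(\<tau>)\<^sup>2\<close>).\<close>
definition BFC_system where
  "BFC_system T D C \<longleftrightarrow>
     (\<exists>(\<eta>::real) (\<tau>::ennreal). 0 < \<eta> \<and> ennreal \<eta> < \<tau> \<and>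
        admissible_in T D C \<tau> \<and> exactly_observable_in T D C \<tau> \<and>
        M2 T D C (ennreal \<eta>) < m2 T D C \<tau>)"

end

theory Submission
  imports Defs
begin

text \<open>
  Every \<open>\<lambda> \<in> \<partial>\<sigma>(A)\<close> is an approximate eigenvalue: there are unit vectors \<open>x \<in> \<D>(A)\<close> with
  \<open>\<parallel>\<lambda>x - Ax\<parallel>\<close> arbitrarily small. Since the derivative of \<open>s \<mapsto> exp(\<lambda>s) T(s) x\<close> is
  \<open>exp(\<lambda>s) T(s) (\<lambda>x - Ax)\<close>, such \<open>x\<close> satisfy \<open>exp(\<lambda>t) T(t) x \<approx> x\<close>. For \<open>t = 1\<close> this gives
  \<open>1 \<le> exp(Re \<lambda>) \<parallel>T(1)\<parallel>\<close>, a lower bound for \<open>Re \<lambda>\<close>. For an upper bound, split the observation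
  energy at time \<open>\<eta>\<close>: for unit \<open>x \<in> \<D>(A)\<close>, \<open>m(\<tau>)\<^sup>2 \<le> M(\<eta>)\<^sup>2 + M(\<tau>)\<^sup>2 \<parallel>T(\<eta>) x\<parallel>\<^sup>2\<close>, so the BFC
  condition \<open>M(\<eta>) < m(\<tau>)\<close> forces \<open>\<parallel>T(\<eta>) x\<parallel> \<ge> c > 0\<close>; then \<open>t = \<eta>\<close> gives \<open>exp(\<eta> Re \<lambda>) c \<le> 1\<close>.
\<close>

lemma norm_bounded_linear_le_of_ball:
  assumes f: "bounded_linear f" and r: "r > 0" and N: "\<And>x. x \<in> ball x0 r \<Longrightarrow> norm (f x) \<le> N"
  shows "norm (f z) \<le> 4 * N / r * norm z"
proof (cases "z = 0")
  case True
  then show ?thesis using f by (simp add: linear_simps)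
next
  case False
  define c where "c = r / (2 * norm z)"
  have c: "c > 0" using False r by (simp add: c_def)
  have "norm (c *\<^sub>R z) < r" using False r by (simp add: c_def)
  then have "norm (f (x0 + c *\<^sub>R z)) \<le> N" "norm (f x0) \<le> N"
    using N r by (auto simp: dist_norm)
  moreover have "c *\<^sub>R f z = f (x0 + c *\<^sub>R z) - f x0"
    using f by (simp add: linear_simps)
  ultimately have "c * norm (f z) \<le> 2 * N"
    using norm_triangle_ineq4[of "f (x0 + c *\<^sub>R z)" "f x0"] c
    by (metis norm_scaleR abs_of_pos mult_2 add_mono order_trans)
  then show ?thesis using c False r by (simp add: c_def field_simps)
qed

lemma uniform_boundedness:
  fixes F :: "'i \<Rightarrow> 'a::banach \<Rightarrow> 'b::real_normed_vector"
  assumes lin: "\<And>i. bounded_linear (F i)"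
    and pointwise: "\<And>x. \<exists>M. \<forall>i. norm (F i x) \<le> M"
  shows "\<exists>K. \<forall>i x. norm (F i x) \<le> K * norm x"
proof -
  define E where "E n = {x. \<forall>i. norm (F i x) \<le> real n}" for n :: nat
  have closed: "closed (E n)" for n
    unfolding E_def Collect_all_eq
    by (intro closed_INT ballI closed_Collect_le continuous_intros linear_continuous_on lin)
  have cover: "x \<in> \<Union>(range E)" for x
  proof -
    obtain M where "\<forall>i. norm (F i x) \<le> M" using pointwise by blast
    then have "x \<in> E (nat \<lceil>M\<rceil>)"
      using real_nat_ceiling_ge[of M] unfolding E_def by (blast intro: order_trans)
    then show ?thesis by blast
  qed
  have "\<exists>n. interior (E n) \<noteq> {}"
  proof (rule ccontr)
    assume "\<nexists>n. interior (E n) \<noteq> {}"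
    then have "euclidean interior_of \<Union>(range E) = {}"
      by (intro Baire_category_alt) (auto simp: completely_metrizable_space_euclidean closed)
    moreover have "\<Union>(range E) = UNIV" using cover by blast
    ultimately show False by simp
  qed
  then obtain n x0 r where r: "r > 0" "ball x0 r \<subseteq> E n"
    by (meson equals0I mem_interior)
  then have "norm (F i z) \<le> 4 * real n / r * norm z" for i z
    by (intro norm_bounded_linear_le_of_ball lin) (auto simp: E_def)
  then show ?thesis by blast
qed

lemma ennreal_gap_lower_bound:
  fixes a b B :: ennreal
  assumes "a < b" and "B < \<infinity>"
  shows "\<exists>c>0. \<forall>s\<ge>0. b \<le> a + B * ennreal s \<longrightarrow> c \<le> s"
proof (cases "b < \<infinity> \<and> B \<noteq> 0")
  case True
  then obtain a' b' B' where ab: "a = ennreal a'" "b = ennreal b'" "B = ennreal B'"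
    and nn: "0 \<le> a'" "0 \<le> b'" "0 < B'"
    using assms by (metis ennreal_cases ennreal_less_zero_iff less_le not_top_less not_gr_zero top.not_eq_extremum)
  have "a' < b'" using assms(1) ab nn by (simp add: ennreal_less_iff)
  moreover have "(b' - a') / B' \<le> s" if "0 \<le> s" "b \<le> a + B * ennreal s" for s
  proof -
    have "ennreal b' \<le> ennreal (a' + B' * s)"
      using that ab nn by (simp add: ennreal_mult ennreal_plus)
    then have "b' \<le> a' + B' * s"
      using nn that by (metis ennreal_le_iff add_nonneg_nonneg mult_nonneg_nonneg less_imp_le)
    then show ?thesis using nn by (simp add: field_simps)
  qed
  ultimately show ?thesis using nn by (intro exI[of _ "(b' - a') / B'"]) auto
next
  case False
  have "a < \<infinity>" using order.strict_trans2[OF assms(1) top_greatest] by simp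
  have "a + B * ennreal s < b" for s
  proof (cases "B = 0")
    case False
    then have "b = \<infinity>" using \<open>\<not> (b < \<infinity> \<and> B \<noteq> 0)\<close> by (simp flip: less_top)
    moreover have "B * ennreal s < \<infinity>" using assms(2) by (simp add: ennreal_mult_less_top)
    ultimately show ?thesis using \<open>a < \<infinity>\<close> by (simp add: ennreal_add_less_top)
  qed (use assms(1) in simp)
  then have "\<not> b \<le> a + B * ennreal s" for s by (meson leD)
  then show ?thesis by (intro exI[of _ 1]) auto
qed

locale complex_space =
  fixes sc :: "complex \<Rightarrow> 'x::real_normed_vector \<Rightarrow> 'x"
  assumes complex_structure: "complex_structure sc"
begin

lemma sc_add: "sc a (x + y) = sc a x + sc a y"
  and sc_add_left: "sc (a + b) x = sc a x + sc b x"
  and sc_sc: "sc a (sc b x) = sc (a * b) x"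
  and sc_of_real: "sc (complex_of_real r) x = r *\<^sub>R x"
  and norm_sc: "norm (sc a x) = cmod a * norm x"
  using complex_structure unfolding complex_structure_def by blast+

lemma sc_one: "sc 1 x = x"
  using sc_of_real[of 1 x] by simp

lemma sc_diff_left: "sc (a - b) x = sc a x - sc b x"
  by (metis add_diff_cancel diff_add_cancel sc_add_left)

lemma sc_scaleR: "sc a (r *\<^sub>R x) = r *\<^sub>R sc a x"
  by (metis mult.commute sc_of_real sc_sc)

lemma sc_scaleR_left: "sc (r *\<^sub>R a) x = r *\<^sub>R sc a x"
  by (metis sc_sc sc_of_real scaleR_conv_of_real)

lemma bounded_linear_sc: "bounded_linear (sc a)"
  by (rule bounded_linear_intro[of _ "cmod a"]) (auto simp: sc_add sc_scaleR norm_sc mult.commute)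

lemma bounded_bilinear_sc: "bounded_bilinear sc"
  by (rule bounded_bilinear.intro)
     (auto intro!: exI[of _ 1] simp: sc_add sc_add_left sc_scaleR sc_scaleR_left norm_sc mult.commute)

lemma sc_diff: "sc a (x - y) = sc a x - sc a y"
  and sc_minus: "sc a (- x) = - sc a x"
  using bounded_linear_sc[of a] by (simp_all add: linear_simps)

end

locale c0_semigroup = complex_space sc for sc :: "complex \<Rightarrow> 'x::banach \<Rightarrow> 'x" +
  fixes T :: "real \<Rightarrow> 'x \<Rightarrow> 'x"
  assumes C0_semigroup: "C0_semigroup sc T"
begin

lemma bounded_linear_T: "t \<ge> 0 \<Longrightarrow> bounded_linear (T t)"
  and T_sc: "t \<ge> 0 \<Longrightarrow> T t (sc a x) = sc a (T t x)"
  and T_0: "T 0 x = x"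
  and T_add: "s \<ge> 0 \<Longrightarrow> t \<ge> 0 \<Longrightarrow> T (s + t) x = T s (T t x)"
  and T_tendsto_at_right: "((\<lambda>t. T t x) \<longlongrightarrow> x) (at_right 0)"
  using C0_semigroup unfolding C0_semigroup_def complex_linear_map_def by auto

lemma T_zero: "t \<ge> 0 \<Longrightarrow> T t 0 = 0"
  and T_diff: "t \<ge> 0 \<Longrightarrow> T t (x - y) = T t x - T t y"
  and T_plus: "t \<ge> 0 \<Longrightarrow> T t (x + y) = T t x + T t y"
  and T_scaleR: "t \<ge> 0 \<Longrightarrow> T t (r *\<^sub>R x) = r *\<^sub>R T t x"
  using bounded_linear_T by (simp_all add: linear_simps)

lemma continuous_T_at_0: "continuous (at 0 within {0..}) (\<lambda>t. T t x)"
  unfolding continuous_within at_within_Ici_at_right using T_tendsto_at_right by (simp add: T_0)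

lemma T_near_id:
  assumes "e > 0" shows "\<exists>d>0. \<forall>h. 0 \<le> h \<longrightarrow> h < d \<longrightarrow> norm (T h x - x) < e"
  using continuous_T_at_0[of x] assms
  unfolding continuous_within_eps_delta by (force simp: T_0 dist_norm)

text \<open>If \<open>\<parallel>T(t)\<parallel>\<close> were unbounded near \<open>0\<close>, there would be \<open>t\<^sub>n \<rightarrow> 0\<close> with \<open>\<parallel>T(t\<^sub>n)\<parallel> \<ge> n\<close>,
  although every orbit \<open>T(t\<^sub>n) x \<rightarrow> x\<close> is bounded: this contradicts uniform boundedness.\<close>
lemma T_bounded_near_0: "\<exists>\<delta>>0. \<exists>K. \<forall>t z. 0 \<le> t \<longrightarrow> t \<le> \<delta> \<longrightarrow> norm (T t z) \<le> K * norm z"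
proof (rule ccontr)
  assume "\<not> ?thesis"
  then have "\<forall>n::nat. \<exists>t z. 0 \<le> t \<and> t \<le> 1 / Suc n \<and> real n * norm z < norm (T t z)"
    by (metis not_le of_nat_0_less_iff zero_less_Suc zero_less_divide_1_iff)
  then obtain t z where t: "\<And>n. 0 \<le> t n" "\<And>n. t n \<le> 1 / Suc n"
    and z: "\<And>n. real n * norm (z n) < norm (T (t n) (z n))"
    by metis
  have "t \<longlonglongrightarrow> 0"
    by (rule real_tendsto_sandwich[OF _ _ tendsto_const LIMSEQ_Suc[OF lim_inverse_n']])
       (use t in \<open>auto simp: inverse_eq_divide\<close>)
  then have "(\<lambda>n. T (t n) x) \<longlonglongrightarrow> T 0 x" for x
    using continuous_T_at_0[of x] t(1) unfolding continuous_within_sequentially comp_def by auto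
  then have "\<exists>M. \<forall>n. norm (T (t n) x) \<le> M" for x
    by (metis convergent_imp_bounded bounded_iff rangeI)
  then obtain K where K: "\<And>n x. norm (T (t n) x) \<le> K * norm x"
    using uniform_boundedness[of "\<lambda>n. T (t n)"] bounded_linear_T[OF t(1)] by blast
  obtain n :: nat where "K \<le> real n" using real_arch_simple by blast
  then have "norm (T (t n) (z n)) \<le> real n * norm (z n)"
    using K[of n "z n"] by (meson mult_right_mono norm_ge_zero order_trans)
  then show False using z[of n] by simp
qed

lemma T_bounded_on_interval: "\<exists>K\<ge>1. \<forall>t z. 0 \<le> t \<longrightarrow> t \<le> b \<longrightarrow> norm (T t z) \<le> K * norm z"
proof -
  obtain \<delta> K0 where \<delta>: "\<delta> > 0" and K0: "\<And>t z. 0 \<le> t \<Longrightarrow> t \<le> \<delta> \<Longrightarrow> norm (T t z) \<le> K0 * norm z"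
    using T_bounded_near_0 by blast
  define K where "K = max 1 K0"
  have K1: "K \<ge> 1" by (simp add: K_def)
  have K: "norm (T t z) \<le> K * norm z" if "0 \<le> t" "t \<le> \<delta>" for t z
    using K0[OF that, of z] by (smt (verit) K_def max.cobounded2 mult_right_mono norm_ge_zero)
  have "norm (T t z) \<le> K ^ Suc k * norm z" if "0 \<le> t" "t \<le> real k * \<delta>" for k t z
    using that
  proof (induction k arbitrary: t)
    case 0
    then show ?case using K \<delta> by simp
  next
    case (Suc k)
    show ?case
    proof (cases "t \<le> \<delta>")
      case True
      have "norm (T t z) \<le> K * norm z" using K Suc.prems True by blast
      also have "\<dots> \<le> K ^ Suc (Suc k) * norm z"
        using power_increasing[of 1 "Suc (Suc k)" K] K1 by (intro mult_right_mono) auto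
      finally show ?thesis .
    next
      case False
      then have t: "0 \<le> t - \<delta>" "t - \<delta> \<le> real k * \<delta>"
        using Suc.prems \<delta> by (auto simp: algebra_simps)
      have "T t z = T \<delta> (T (t - \<delta>) z)" using T_add[of \<delta> "t - \<delta>" z] t \<delta> by simp
      then have "norm (T t z) \<le> K * norm (T (t - \<delta>) z)" using K \<delta> by simp
      also have "\<dots> \<le> K * (K ^ Suc k * norm z)"
        using Suc.IH[OF t] K1 by (intro mult_left_mono) auto
      finally show ?thesis by simp
    qed
  qed
  moreover obtain k :: nat where "b / \<delta> \<le> real k" using real_arch_simple by blast
  then have "b \<le> real k * \<delta>" using \<delta> by (simp add: field_simps)
  ultimately show ?thesis
    using K1 by (intro exI[of _ "K ^ Suc k"]) (auto intro: order_trans)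
qed

lemma continuous_T: assumes s: "s \<ge> 0" shows "continuous (at s within {0..}) (\<lambda>t. T t z)"
  unfolding continuous_within_eps_delta
proof (intro allI impI)
  fix e :: real assume e: "e > 0"
  obtain K where K: "K \<ge> 1" "\<And>t z. 0 \<le> t \<Longrightarrow> t \<le> s + 1 \<Longrightarrow> norm (T t z) \<le> K * norm z"
    using T_bounded_on_interval[of "s + 1"] by blast
  obtain d where d: "d > 0" "\<And>h. 0 \<le> h \<Longrightarrow> h < d \<Longrightarrow> norm (T h z - z) < e / K"
    using T_near_id[of "e / K" z] e K by auto
  have "norm (T t z - T s z) < e" if t: "0 \<le> t" "\<bar>t - s\<bar> < min d 1" for t
  proof -
    have "norm (T t z - T s z) \<le> K * norm (T \<bar>t - s\<bar> z - z)"
    proof (cases "s \<le> t")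
      case True
      then have "T t z - T s z = T s (T (t - s) z - z)"
        using T_add[of s "t - s" z] s by (simp add: T_diff)
      then show ?thesis using K s t True by simp
    next
      case False
      then have "T t z - T s z = - T t (T (s - t) z - z)"
        using T_add[of t "s - t" z] t by (simp add: T_diff)
      then show ?thesis using K t False by simp
    qed
    also have "\<dots> < K * (e / K)" using d t K by (intro mult_strict_left_mono) auto
    finally show ?thesis using K by simp
  qed
  then show "\<exists>d>0. \<forall>t\<in>{0..}. dist t s < d \<longrightarrow> dist (T t z) (T s z) < e"
    using d by (intro exI[of _ "min d 1"]) (auto simp: dist_norm)
qed

end

locale c0_generator = c0_semigroup sc T for sc :: "complex \<Rightarrow> 'x::banach \<Rightarrow> 'x" and T +
  fixes D :: "'x set" and A :: "'x \<Rightarrow> 'x"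
  assumes minus_generator: "minus_generator T D A"
begin

lemma generator_tendsto: "x \<in> D \<Longrightarrow> ((\<lambda>h. (1 / h) *\<^sub>R (T h x - x)) \<longlongrightarrow> - A x) (at_right 0)"
  using minus_generator unfolding minus_generator_def by blast

lemma in_domainI:
  assumes lim: "((\<lambda>h. (1 / h) *\<^sub>R (T h x - x)) \<longlongrightarrow> y) (at_right 0)"
  shows "x \<in> D" and "A x = - y"
proof -
  show x: "x \<in> D" using minus_generator lim unfolding minus_generator_def by blast
  show "A x = - y" using tendsto_unique[OF _ generator_tendsto[OF x] lim] by (simp add: minus_equation_iff)
qed

lemma domain_commuting_map:
  assumes L: "bounded_linear L" and comm: "\<And>h x. h > 0 \<Longrightarrow> T h (L x) = L (T h x)" and x: "x \<in> D"
  shows "L x \<in> D" and "A (L x) = L (A x)"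
proof -
  have "((\<lambda>h. L ((1 / h) *\<^sub>R (T h x - x))) \<longlongrightarrow> L (- A x)) (at_right 0)"
    using bounded_linear.tendsto[OF L generator_tendsto[OF x]] .
  moreover have "\<forall>\<^sub>F h in at_right 0. L ((1 / h) *\<^sub>R (T h x - x)) = (1 / h) *\<^sub>R (T h (L x) - L x)"
    using eventually_at_right_less[of 0] by eventually_elim (simp add: comm linear_simps L)
  ultimately have "((\<lambda>h. (1 / h) *\<^sub>R (T h (L x) - L x)) \<longlongrightarrow> L (- A x)) (at_right 0)"
    by (rule Lim_transform_eventually)
  then show "L x \<in> D" "A (L x) = L (A x)"
    using in_domainI L by (auto simp: linear_simps)
qed

lemma domain_sc: "x \<in> D \<Longrightarrow> sc a x \<in> D" and A_sc: "x \<in> D \<Longrightarrow> A (sc a x) = sc a (A x)"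
  using domain_commuting_map[OF bounded_linear_sc, of a] T_sc by auto

lemma domain_scaleR: "x \<in> D \<Longrightarrow> r *\<^sub>R x \<in> D" and A_scaleR: "x \<in> D \<Longrightarrow> A (r *\<^sub>R x) = r *\<^sub>R A x"
  using domain_sc[of x "complex_of_real r"] A_sc[of x "complex_of_real r"] by (simp_all add: sc_of_real)

lemma domain_T: "x \<in> D \<Longrightarrow> t \<ge> 0 \<Longrightarrow> T t x \<in> D"
  and A_T: "x \<in> D \<Longrightarrow> t \<ge> 0 \<Longrightarrow> A (T t x) = T t (A x)"
proof -
  assume x: "x \<in> D" and t: "t \<ge> 0"
  have "T h (T t y) = T t (T h y)" if "h > 0" for h y
    using T_add[of h t y] T_add[of t h y] that t by (simp add: add.commute)
  then show "T t x \<in> D" "A (T t x) = T t (A x)"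
    using domain_commuting_map[OF bounded_linear_T[OF t] _ x] by auto
qed

lemma domain_add: "x \<in> D \<Longrightarrow> y \<in> D \<Longrightarrow> x + y \<in> D"
  and A_add: "x \<in> D \<Longrightarrow> y \<in> D \<Longrightarrow> A (x + y) = A x + A y"
proof -
  assume x: "x \<in> D" and y: "y \<in> D"
  have "((\<lambda>h. (1 / h) *\<^sub>R (T h x - x) + (1 / h) *\<^sub>R (T h y - y)) \<longlongrightarrow> - A x + - A y) (at_right 0)"
    using tendsto_add[OF generator_tendsto[OF x] generator_tendsto[OF y]] .
  moreover have "\<forall>\<^sub>F h in at_right 0.
      (1 / h) *\<^sub>R (T h x - x) + (1 / h) *\<^sub>R (T h y - y) = (1 / h) *\<^sub>R (T h (x + y) - (x + y))"
    using eventually_at_right_less[of 0] by eventually_elim (simp add: T_plus algebra_simps)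
  ultimately have "((\<lambda>h. (1 / h) *\<^sub>R (T h (x + y) - (x + y))) \<longlongrightarrow> - A x + - A y) (at_right 0)"
    by (rule Lim_transform_eventually)
  then show "x + y \<in> D" "A (x + y) = A x + A y" using in_domainI by auto
qed

lemma domain_diff: "x \<in> D \<Longrightarrow> y \<in> D \<Longrightarrow> x - y \<in> D"
  and A_diff: "x \<in> D \<Longrightarrow> y \<in> D \<Longrightarrow> A (x - y) = A x - A y"
  using domain_add[of x "(-1) *\<^sub>R y"] A_add[of x "(-1) *\<^sub>R y"] domain_scaleR[of y "-1"] A_scaleR[of y "-1"]
  by simp_all

lemma domain_zero: "0 \<in> D"
proof -
  have "\<forall>\<^sub>F h in at_right 0. 0 = (1 / h) *\<^sub>R (T h 0 - 0)"
    using eventually_at_right_less[of 0] by eventually_elim (simp add: T_zero)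
  then have "((\<lambda>h. (1 / h) *\<^sub>R (T h 0 - 0)) \<longlongrightarrow> 0) (at_right 0)"
    by (rule Lim_transform_eventually[OF tendsto_const])
  then show ?thesis by (rule in_domainI)
qed

lemma generator_remainder:
  assumes x: "x \<in> D" and e: "e > 0"
  shows "\<exists>d>0. \<forall>h. 0 < h \<longrightarrow> h < d \<longrightarrow> norm (T h x - x + h *\<^sub>R A x) \<le> e * h"
proof -
  have "\<forall>\<^sub>F h in at_right 0. dist ((1 / h) *\<^sub>R (T h x - x)) (- A x) < e"
    using generator_tendsto[OF x] e by (simp add: tendsto_iff)
  then obtain d where d: "d > 0" "\<And>h. 0 < h \<Longrightarrow> h < d \<Longrightarrow> norm ((1 / h) *\<^sub>R (T h x - x) + A x) < e"
    by (auto simp: eventually_at_right_field dist_norm)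
  have "norm (T h x - x + h *\<^sub>R A x) \<le> e * h" if h: "0 < h" "h < d" for h
  proof -
    have "T h x - x + h *\<^sub>R A x = h *\<^sub>R ((1 / h) *\<^sub>R (T h x - x) + A x)"
      using h by (simp add: algebra_simps)
    then show ?thesis using d(2)[OF h] h by (simp add: mult.commute)
  qed
  then show ?thesis using d(1) by blast
qed

lemma T_increment_right:
  assumes "0 \<le> s" "0 \<le> h"
  shows "T (s + h) x - T s x + h *\<^sub>R T s (A x) = T s (T h x - x + h *\<^sub>R A x)"
  using assms T_add[of s h x] by (simp add: T_diff T_plus T_scaleR)

lemma norm_T_increment_left_le:
  assumes "0 \<le> y" "0 \<le> h" and K: "\<And>z. norm (T y z) \<le> K * norm z"
  shows "norm (T y x - T (y + h) x - h *\<^sub>R T (y + h) (A x))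
    \<le> K * norm (T h x - x + h *\<^sub>R A x) + h * norm (T y (A x) - T (y + h) (A x))"
proof -
  have "T y x - T (y + h) x - h *\<^sub>R T (y + h) (A x)
      = - T y (T h x - x + h *\<^sub>R A x) + h *\<^sub>R (T y (A x) - T (y + h) (A x))"
    using assms T_add[of y h x] by (simp add: T_diff T_plus T_scaleR algebra_simps)
  then have "norm (T y x - T (y + h) x - h *\<^sub>R T (y + h) (A x))
      \<le> norm (T y (T h x - x + h *\<^sub>R A x)) + h * norm (T y (A x) - T (y + h) (A x))"
    using norm_triangle_ineq[of "- T y (T h x - x + h *\<^sub>R A x)" "h *\<^sub>R (T y (A x) - T (y + h) (A x))"]
      assms(2) by simp
  then show ?thesis using K[of "T h x - x + h *\<^sub>R A x"] by linarith
qed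

lemma has_vector_derivative_T:
  assumes x: "x \<in> D" and s: "s \<ge> 0"
  shows "((\<lambda>t. T t x) has_vector_derivative - T s (A x)) (at s within {0..})"
  unfolding has_vector_derivative_def has_derivative_within_alt
proof (intro conjI allI impI)
  show "bounded_linear (\<lambda>h. h *\<^sub>R - T s (A x))" by (rule bounded_linear_scaleR_left)
  fix e :: real assume e: "e > 0"
  obtain K where K: "K \<ge> 1" "\<And>t z. 0 \<le> t \<Longrightarrow> t \<le> s + 1 \<Longrightarrow> norm (T t z) \<le> K * norm z"
    using T_bounded_on_interval[of "s + 1"] by blast
  obtain d1 where d1: "d1 > 0" "\<And>h. 0 < h \<Longrightarrow> h < d1 \<Longrightarrow> norm (T h x - x + h *\<^sub>R A x) \<le> e / (2 * K) * h"
    using generator_remainder[OF x, of "e / (2 * K)"] e K by auto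
  obtain d2 where d2: "d2 > 0" "\<And>t. t \<in> {0..} \<Longrightarrow> dist t s < d2 \<Longrightarrow> dist (T t (A x)) (T s (A x)) < e / 2"
    using continuous_T[OF s, of "A x"] e unfolding continuous_within_eps_delta by (meson half_gt_zero)
  have "norm (T y x - T s x - (y - s) *\<^sub>R - T s (A x)) \<le> e * norm (y - s)"
    if y: "0 \<le> y" "\<bar>y - s\<bar> < min (min d1 d2) 1" for y
  proof (cases rule: linorder_cases[of s y])
    case less
    define h where "h = y - s"
    have h: "0 < h" "h < d1" and y_eq: "y = s + h" using less y by (auto simp: h_def)
    have "norm (T y x - T s x - (y - s) *\<^sub>R - T s (A x)) \<le> K * norm (T h x - x + h *\<^sub>R A x)"
      using T_increment_right[of s h] K(2)[of s] s h by (simp add: y_eq)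
    also have "\<dots> \<le> K * (e / (2 * K) * h)" using d1(2)[OF h] K by (intro mult_left_mono) auto
    also have "\<dots> \<le> e * norm (y - s)" using K e h by (simp add: h_def field_simps)
    finally show ?thesis .
  next
    case greater
    define h where "h = s - y"
    have h: "0 < h" "h < d1" and s_eq: "s = y + h" using greater y by (auto simp: h_def)
    have "norm (T y x - T s x - (y - s) *\<^sub>R - T s (A x))
        \<le> K * norm (T h x - x + h *\<^sub>R A x) + h * norm (T y (A x) - T s (A x))"
      using norm_T_increment_left_le[of y h] K(2)[of y] y h by (simp add: s_eq)
    also have "\<dots> \<le> K * (e / (2 * K) * h) + h * (e / 2)"
    proof (intro add_mono mult_left_mono)
      show "norm (T h x - x + h *\<^sub>R A x) \<le> e / (2 * K) * h" using d1(2)[OF h] .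
      show "norm (T y (A x) - T s (A x)) \<le> e / 2"
        using d2(2)[of y] y by (auto simp: dist_norm dist_real_def)
    qed (use K h in auto)
    also have "\<dots> = e * norm (y - s)" using K h by (simp add: h_def field_simps)
    finally show ?thesis .
  qed simp
  then show "\<exists>d>0. \<forall>y\<in>{0..}. norm (y - s) < d \<longrightarrow>
      norm (T y x - T s x - (y - s) *\<^sub>R - T s (A x)) \<le> e * norm (y - s)"
    using d1 d2 by (intro exI[of _ "min (min d1 d2) 1"]) auto
qed

lemma norm_exp_T_minus_id_le:
  fixes l :: complex
  assumes x: "x \<in> D" and t: "t \<ge> 0"
    and K: "\<And>s z. 0 \<le> s \<Longrightarrow> s \<le> t \<Longrightarrow> norm (T s z) \<le> K * norm z"
  shows "norm (sc (exp (l * complex_of_real t)) (T t x) - x) \<le> exp (\<bar>Re l\<bar> * t) * K * norm (sc l x - A x) * t"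
proof -
  define f where "f s = sc (exp (l * complex_of_real s)) (T s x)" for s
  define v where "v s = sc (exp (l * complex_of_real s)) (T s (sc l x - A x))" for s
  have "(f has_vector_derivative v s) (at s within {0..t})" if s: "s \<in> {0..t}" for s
  proof -
    have "((\<lambda>s. exp (l * complex_of_real s)) has_vector_derivative l * exp (l * complex_of_real s)) (at s within {0..t})"
      by (rule has_vector_derivative_real_field[where f="\<lambda>z. exp (l * z)", simplified])
         (auto intro!: derivative_eq_intros simp: mult.commute)
    moreover have "((\<lambda>t. T t x) has_vector_derivative - T s (A x)) (at s within {0..t})"
      using s by (intro has_vector_derivative_within_subset[OF has_vector_derivative_T[OF x]]) auto
    ultimately have "(f has_derivative (\<lambda>h. sc (exp (l * complex_of_real s)) (h *\<^sub>R - T s (A x))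
        + sc (h *\<^sub>R (l * exp (l * complex_of_real s))) (T s x))) (at s within {0..t})"
      unfolding f_def has_vector_derivative_def by (rule bounded_bilinear.FDERIV[OF bounded_bilinear_sc])
    moreover have "sc (exp (l * complex_of_real s)) (h *\<^sub>R - T s (A x)) + sc (h *\<^sub>R (l * exp (l * complex_of_real s))) (T s x)
        = h *\<^sub>R v s" for h
      using s by (simp add: v_def sc_scaleR sc_scaleR_left sc_sc sc_diff sc_minus T_sc T_diff
          mult.commute algebra_simps)
    ultimately show ?thesis by (simp add: has_vector_derivative_def)
  qed
  moreover have "norm (v s) \<le> exp (\<bar>Re l\<bar> * t) * K * norm (sc l x - A x)" if s: "s \<in> {0..t}" for s
  proof -
    have "norm (v s) = exp (Re l * s) * norm (T s (sc l x - A x))"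
      by (simp add: v_def norm_sc)
    also have "\<dots> \<le> exp (\<bar>Re l\<bar> * t) * (K * norm (sc l x - A x))"
    proof (rule mult_mono)
      have "Re l * s \<le> \<bar>Re l\<bar> * t"
        using s by (meson abs_ge_self abs_ge_zero atLeastAtMost_iff mult_mono)
      then show "exp (Re l * s) \<le> exp (\<bar>Re l\<bar> * t)" by simp
    qed (use K s in auto)
    finally show ?thesis by simp
  qed
  then have "onorm (\<lambda>h. h *\<^sub>R v s) \<le> exp (\<bar>Re l\<bar> * t) * K * norm (sc l x - A x)"
    if "s \<in> {0..t}" for s
    using that by (intro onorm_le) (auto simp: mult.commute intro: mult_left_mono)
  ultimately have "norm (f t - f 0) \<le> exp (\<bar>Re l\<bar> * t) * K * norm (sc l x - A x) * norm (t - 0)"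
    using t by (intro differentiable_bound[of "{0..t}"]) (auto simp: has_vector_derivative_def)
  then show ?thesis using t by (simp add: f_def T_0 sc_one)
qed

lemma lower_bound_shift:
  assumes low: "\<And>x. x \<in> D \<Longrightarrow> c * norm x \<le> norm (sc l x - A x)" and x: "x \<in> D"
  shows "(c - cmod (m - l)) * norm x \<le> norm (sc m x - A x)"
proof -
  have "sc l x - A x = (sc m x - A x) - sc (m - l) x" by (simp add: sc_diff_left)
  then have "norm (sc l x - A x) \<le> norm (sc m x - A x) + cmod (m - l) * norm x"
    by (metis norm_sc norm_triangle_ineq4)
  then show ?thesis using low[OF x] by (simp add: algebra_simps)
qed

lemma not_in_spectrumI:
  assumes surj: "\<And>y. \<exists>x\<in>D. sc l x - A x = y"
    and c: "c > 0" and low: "\<And>x. x \<in> D \<Longrightarrow> c * norm x \<le> norm (sc l x - A x)"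
  shows "l \<notin> op_spectrum sc D A"
proof -
  have inj: "x1 = x2" if "x1 \<in> D" "x2 \<in> D" "sc l x1 - A x1 = sc l x2 - A x2" for x1 x2
  proof -
    have "sc l (x1 - x2) - A (x1 - x2) = 0"
      using that by (simp add: A_diff sc_diff algebra_simps)
    then show ?thesis using low[OF domain_diff[OF that(1,2)]] c by (simp add: mult_le_0_iff)
  qed
  define R where "R y = (THE x. x \<in> D \<and> sc l x - A x = y)" for y
  have R: "R y \<in> D" "sc l (R y) - A (R y) = y" for y
    using theI'[of "\<lambda>x. x \<in> D \<and> sc l x - A x = y"] surj inj unfolding R_def by blast+
  have R_inverse: "R (sc l x - A x) = x" if "x \<in> D" for x
    using inj[OF R(1) that] R(2) by blast
  have "bounded_linear R"
  proof (rule bounded_linear_intro[of _ "1 / c"])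
    show "R (y1 + y2) = R y1 + R y2" for y1 y2
    proof -
      have "sc l (R y1 + R y2) - A (R y1 + R y2) = y1 + y2"
        using R by (simp add: A_add sc_add algebra_simps)
      then show ?thesis by (metis R(1) R_inverse domain_add)
    qed
    show "R (r *\<^sub>R y) = r *\<^sub>R R y" for r y
    proof -
      have "sc l (r *\<^sub>R R y) - A (r *\<^sub>R R y) = r *\<^sub>R y"
        using R by (simp add: A_scaleR sc_scaleR algebra_simps)
      then show ?thesis by (metis R(1) R_inverse domain_scaleR)
    qed
    show "norm (R y) \<le> norm y * (1 / c)" for y
      using low[OF R(1), of y] c by (simp add: R field_simps mult.commute)
  qed
  then show ?thesis unfolding op_spectrum_def using R R_inverse by blast
qed

text \<open>Surjectivity of \<open>n - A = (m - A) + (n - m)\<close> is obtained from the Banach fixed point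
  theorem: \<open>z \<mapsto> y - (n - m) R z\<close> is a contraction for \<open>R = (m - A)\<^sup>-\<^sup>1\<close>.\<close>
lemma not_in_spectrum_near:
  assumes m: "m \<notin> op_spectrum sc D A" and c: "c > 0"
    and low: "\<And>x. x \<in> D \<Longrightarrow> c * norm x \<le> norm (sc m x - A x)"
    and nm: "cmod (n - m) < c"
  shows "n \<notin> op_spectrum sc D A"
proof (rule not_in_spectrumI)
  obtain R where R: "bounded_linear R" "\<And>y. R y \<in> D" "\<And>y. sc m (R y) - A (R y) = y"
    using m unfolding op_spectrum_def by blast
  have R_le: "norm (R y) \<le> norm y / c" for y
    using low[OF R(2)[of y]] R(3)[of y] c by (simp add: field_simps mult.commute)
  fix y
  define g where "g z = y - sc (n - m) (R z)" for z
  have "dist (g z1) (g z2) \<le> cmod (n - m) / c * dist z1 z2" for z1 z2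
  proof -
    have "g z1 - g z2 = - sc (n - m) (R (z1 - z2))"
      using R(1) by (simp add: g_def sc_diff linear_simps)
    then have "dist (g z1) (g z2) = cmod (n - m) * norm (R (z1 - z2))"
      by (simp add: dist_norm norm_sc)
    also have "\<dots> \<le> cmod (n - m) * (norm (z1 - z2) / c)" by (intro mult_left_mono R_le) auto
    finally show ?thesis by (simp add: dist_norm)
  qed
  then obtain z where z: "g z = z"
    using banach_fix_type[of "cmod (n - m) / c" g] c nm by auto
  have "sc n (R z) - A (R z) = sc (n - m) (R z) + (sc m (R z) - A (R z))"
    by (simp add: sc_diff_left)
  also have "\<dots> = y" using z R(3) by (simp add: g_def algebra_simps)
  finally show "\<exists>x\<in>D. sc n x - A x = y" using R(2) by blast
next
  show "c - cmod (n - m) > 0" using nm by simp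
  show "(c - cmod (n - m)) * norm x \<le> norm (sc n x - A x)" if "x \<in> D" for x
    by (rule lower_bound_shift[OF low that])
qed

text \<open>A lower bound for \<open>\<lambda> - A\<close> would persist near \<open>\<lambda>\<close> and carry invertibility from a
  nearby resolvent point to a nearby spectral point.\<close>
lemma frontier_spectrum_approx_eigenvalue:
  assumes l: "l \<in> frontier (op_spectrum sc D A)" and e: "e > 0"
  shows "\<exists>x\<in>D. norm x = 1 \<and> norm (sc l x - A x) < e"
proof (rule ccontr)
  assume no_approx: "\<not> ?thesis"
  have low: "e * norm x \<le> norm (sc l x - A x)" if x: "x \<in> D" for x
  proof (cases "x = 0")
    case False
    define u where "u = (1 / norm x) *\<^sub>R x"
    have "u \<in> D" "norm u = 1" using domain_scaleR[OF x] False by (auto simp: u_def)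
    then have "e \<le> norm (sc l u - A u)" using no_approx by force
    also have "sc l u - A u = (1 / norm x) *\<^sub>R (sc l x - A x)"
      using x by (simp add: u_def A_scaleR sc_scaleR flip: scaleR_diff_right)
    also have "norm \<dots> = norm (sc l x - A x) / norm x" by simp
    finally show ?thesis using False by (simp add: field_simps)
  qed simp
  have "l \<in> closure (op_spectrum sc D A)" "l \<notin> interior (op_spectrum sc D A)" using l by (auto simp: frontier_def)
  obtain n where n: "n \<in> op_spectrum sc D A" "cmod (n - l) < e / 4"
    using \<open>l \<in> closure (op_spectrum sc D A)\<close> e
    by (metis closure_approachable dist_norm zero_less_divide_iff zero_less_numeral)
  have "\<not> ball l (e / 4) \<subseteq> op_spectrum sc D A"
    using \<open>l \<notin> interior (op_spectrum sc D A)\<close> e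
    by (meson interior_maximal open_ball centre_in_ball subsetD zero_less_divide_iff zero_less_numeral)
  then obtain m where "m \<in> ball l (e / 4)" "m \<notin> op_spectrum sc D A" by blast
  then have m: "m \<notin> op_spectrum sc D A" "cmod (m - l) < e / 4"
    by (auto simp: dist_norm norm_minus_commute)
  have low_m: "3 * e / 4 * norm x \<le> norm (sc m x - A x)" if "x \<in> D" for x
  proof -
    have "3 * e / 4 * norm x \<le> (e - cmod (m - l)) * norm x"
      using m(2) by (intro mult_right_mono) auto
    with lower_bound_shift[OF low that, of m] show ?thesis by linarith
  qed
  have nm: "cmod (n - m) < 3 * e / 4"
    using n(2) m(2) norm_triangle_ineq4[of "n - l" "m - l"] e by simp
  then show False
    using not_in_spectrum_near[OF m(1) _ low_m nm] n(1) e by simp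
qed

lemma frontier_spectrum_approx_T:
  assumes l: "l \<in> frontier (op_spectrum sc D A)" and t: "t \<ge> 0" and \<delta>: "\<delta> > 0"
  shows "\<exists>x\<in>D. norm x = 1 \<and> norm (sc (exp (l * complex_of_real t)) (T t x) - x) < \<delta>"
proof -
  obtain K where K: "K \<ge> 1" "\<And>s z. 0 \<le> s \<Longrightarrow> s \<le> t \<Longrightarrow> norm (T s z) \<le> K * norm z"
    using T_bounded_on_interval[of t] by blast
  define Q where "Q = exp (\<bar>Re l\<bar> * t) * K * t"
  have Q: "Q \<ge> 0" using t K by (simp add: Q_def)
  obtain x where x: "x \<in> D" "norm x = 1" "norm (sc l x - A x) < \<delta> / (Q + 1)"
    using frontier_spectrum_approx_eigenvalue[OF l, of "\<delta> / (Q + 1)"] \<delta> Q by auto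
  have "norm (sc (exp (l * complex_of_real t)) (T t x) - x) \<le> Q * norm (sc l x - A x)"
    using norm_exp_T_minus_id_le[OF x(1) t K(2)] by (simp add: Q_def mult_ac)
  also have "\<dots> \<le> Q * (\<delta> / (Q + 1))" using x(3) Q by (intro mult_left_mono) auto
  also have "\<dots> < \<delta>" using Q \<delta> by (simp add: field_simps)
  finally show ?thesis using x by blast
qed

lemma frontier_spectrum_Re_lower_bound: "\<exists>r. \<forall>l\<in>frontier (op_spectrum sc D A). r \<le> Re l"
proof -
  obtain K where K: "K \<ge> 1" "\<And>s z. 0 \<le> s \<Longrightarrow> s \<le> 1 \<Longrightarrow> norm (T s z) \<le> K * norm z"
    using T_bounded_on_interval[of 1] by blast
  have "- ln K \<le> Re l" if l: "l \<in> frontier (op_spectrum sc D A)" for l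
  proof -
    have "1 \<le> exp (Re l) * K + \<delta>" if \<delta>: "\<delta> > 0" for \<delta>
    proof -
      obtain x where x: "x \<in> D" "norm x = 1" "norm (sc (exp l) (T 1 x) - x) < \<delta>"
        using frontier_spectrum_approx_T[OF l zero_le_one \<delta>] by auto
      have "1 \<le> norm (sc (exp l) (T 1 x)) + norm (sc (exp l) (T 1 x) - x)"
        using norm_triangle_sub[of x "sc (exp l) (T 1 x)"] x(2) by (simp add: norm_minus_commute)
      moreover have "norm (sc (exp l) (T 1 x)) \<le> exp (Re l) * K"
        using K(2)[of 1 x] x(2) by (simp add: norm_sc)
      ultimately show ?thesis using x(3) by linarith
    qed
    then have "1 \<le> exp (Re l) * K" by (rule field_le_epsilon)
    then have "exp (- Re l) \<le> exp (ln K)"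
      using K(1) by (simp add: exp_minus inverse_eq_divide divide_le_eq mult.commute)
    then show ?thesis by simp
  qed
  then show ?thesis by blast
qed

lemma frontier_spectrum_Re_upper_bound:
  assumes \<eta>: "\<eta> > 0" and c: "c > 0" and lower: "\<And>x. x \<in> D \<Longrightarrow> norm x = 1 \<Longrightarrow> c \<le> norm (T \<eta> x)"
    and l: "l \<in> frontier (op_spectrum sc D A)"
  shows "Re l \<le> - ln c / \<eta>"
proof -
  have "exp (Re l * \<eta>) * c \<le> 1 + \<delta>" if \<delta>: "\<delta> > 0" for \<delta>
  proof -
    obtain x where x: "x \<in> D" "norm x = 1" "norm (sc (exp (l * complex_of_real \<eta>)) (T \<eta> x) - x) < \<delta>"
      using frontier_spectrum_approx_T[OF l less_imp_le[OF \<eta>] \<delta>] by blast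
    have "exp (Re l * \<eta>) * c \<le> norm (sc (exp (l * complex_of_real \<eta>)) (T \<eta> x))"
      using lower[OF x(1,2)] by (simp add: norm_sc)
    also have "\<dots> \<le> norm x + norm (sc (exp (l * complex_of_real \<eta>)) (T \<eta> x) - x)"
      by (rule norm_triangle_sub)
    finally show ?thesis using x by simp
  qed
  then have "exp (Re l * \<eta>) * c \<le> 1" using field_le_epsilon[of "exp (Re l * \<eta>) * c" 1] by simp
  then have "exp (Re l * \<eta>) \<le> exp (- ln c)"
    using c by (simp add: exp_minus inverse_eq_divide le_divide_eq)
  then have "Re l * \<eta> \<le> - ln c" by simp
  then show ?thesis using \<eta> by (subst pos_le_divide_eq)
qed

end

locale observed_system = c0_generator sc T D A
  for sc :: "complex \<Rightarrow> 'x::banach \<Rightarrow> 'x" and T D A +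
  fixes C :: "'x \<Rightarrow> 'y::real_normed_vector"
  assumes C_add: "x \<in> D \<Longrightarrow> y \<in> D \<Longrightarrow> C (x + y) = C x + C y"
    and C_scaleR: "x \<in> D \<Longrightarrow> C (r *\<^sub>R x) = r *\<^sub>R C x"
    and C_graph_norm_bounded: "\<exists>K. \<forall>x\<in>D. norm (C x) \<le> K * (norm x + norm (A x))"
begin

lemma C_zero: "C 0 = 0"
  using C_scaleR[OF domain_zero, of 0] by simp

lemma C_diff: "x \<in> D \<Longrightarrow> y \<in> D \<Longrightarrow> C (x - y) = C x - C y"
  by (metis C_add add_diff_cancel diff_add_cancel domain_diff)

lemma continuous_on_C_T:
  assumes x: "x \<in> D" shows "continuous_on {0..} (\<lambda>t. C (T t x))"
  unfolding continuous_on_def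
proof (intro ballI)
  fix s :: real assume s: "s \<in> {0..}"
  obtain K where K: "\<And>z. z \<in> D \<Longrightarrow> norm (C z) \<le> K * (norm z + norm (A z))"
    using C_graph_norm_bounded by blast
  have bound: "norm (C (T t x) - C (T s x))
      \<le> K * (norm (T t x - T s x) + norm (T t (A x) - T s (A x)))" if t: "t \<in> {0..}" for t
  proof -
    have Dt: "T t x \<in> D" "T s x \<in> D" using domain_T x t s by auto
    then have "C (T t x) - C (T s x) = C (T t x - T s x)" by (simp add: C_diff)
    moreover have "A (T t x - T s x) = T t (A x) - T s (A x)" using A_diff[OF Dt] A_T x t s by simp
    ultimately show ?thesis using K[OF domain_diff[OF Dt]] by simp
  qed
  have "((\<lambda>t. T t x - T s x) \<longlongrightarrow> 0) (at s within {0..})"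
    "((\<lambda>t. T t (A x) - T s (A x)) \<longlongrightarrow> 0) (at s within {0..})"
    using continuous_T s by (simp_all add: continuous_within LIM_zero)
  then have "((\<lambda>t. K * (norm (T t x - T s x) + norm (T t (A x) - T s (A x)))) \<longlongrightarrow> 0)
      (at s within {0..})"
    by (intro tendsto_mult_right_zero tendsto_add_zero tendsto_norm_zero)
  moreover have "\<forall>\<^sub>F t in at s within {0..}.
      norm (C (T t x) - C (T s x)) \<le> K * (norm (T t x - T s x) + norm (T t (A x) - T s (A x)))"
    unfolding eventually_at_filter by (intro always_eventually) (auto intro: bound)
  ultimately have "((\<lambda>t. C (T t x) - C (T s x)) \<longlongrightarrow> 0) (at s within {0..})"
    by (rule Lim_null_comparison[rotated])
  then show "((\<lambda>t. C (T t x)) \<longlongrightarrow> C (T s x)) (at s within {0..})"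
    by (simp add: LIM_zero_iff)
qed

text \<open>Extended to negative times by its value at \<open>0\<close>, so that it is continuous on all of \<open>\<real>\<close>.\<close>
definition energy_density :: "'x \<Rightarrow> real \<Rightarrow> ennreal" where
  "energy_density x t = ennreal ((norm (C (T (max 0 t) x)))\<^sup>2)"

lemma borel_measurable_energy_density [measurable]:
  assumes "x \<in> D" shows "energy_density x \<in> borel_measurable borel"
proof -
  have "continuous_on UNIV (\<lambda>t. C (T (max 0 t) x))"
    by (rule continuous_on_compose2[OF continuous_on_C_T[OF assms]]) (auto intro!: continuous_intros)
  then have [measurable]: "(\<lambda>t. C (T (max 0 t) x)) \<in> borel_measurable borel"
    by (rule borel_measurable_continuous_onI)
  show ?thesis unfolding energy_density_def by measurable
qed

lemma obs_energy_eq_density: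
  "obs_energy T C \<tau> x = (\<integral>\<^sup>+ t. energy_density x t * indicator {t. 0 \<le> t \<and> ennreal t < \<tau>} t \<partial>lborel)"
  unfolding obs_energy_def by (intro nn_integral_cong) (auto simp: energy_density_def indicator_def)

lemma obs_energy_scaleR:
  assumes x: "x \<in> D"
  shows "obs_energy T C \<tau> (r *\<^sub>R x) = ennreal (r\<^sup>2) * obs_energy T C \<tau> x"
proof -
  have "energy_density (r *\<^sub>R x) t = ennreal (r\<^sup>2) * energy_density x t" for t
    using x by (simp add: energy_density_def T_scaleR C_scaleR domain_T power_mult_distrib
        flip: ennreal_mult)
  then show ?thesis
    unfolding obs_energy_eq_density using x by (simp add: mult.assoc nn_integral_cmult)
qed

lemma obs_energy_le_M2:
  assumes y: "y \<in> D" shows "obs_energy T C \<tau> y \<le> M2 T D C \<tau> * ennreal ((norm y)\<^sup>2)"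
proof (cases "y = 0")
  case True
  then show ?thesis by (simp add: obs_energy_eq_density energy_density_def T_zero C_zero)
next
  case False
  define u where "u = (1 / norm y) *\<^sub>R y"
  have u: "u \<in> D" "norm u = 1" and y_eq: "y = norm y *\<^sub>R u"
    using domain_scaleR[OF y] False by (auto simp: u_def)
  have "obs_energy T C \<tau> y = ennreal ((norm y)\<^sup>2) * obs_energy T C \<tau> u"
    by (subst y_eq) (rule obs_energy_scaleR[OF u(1)])
  also have "\<dots> \<le> ennreal ((norm y)\<^sup>2) * M2 T D C \<tau>"
    unfolding M2_def by (intro mult_left_mono SUP_upper) (use u in auto)
  finally show ?thesis by (simp add: mult.commute)
qed

lemma obs_energy_split:
  assumes x: "x \<in> D" and \<eta>: "\<eta> > 0"
  shows "obs_energy T C \<tau> x \<le> obs_energy T C (ennreal \<eta>) x + obs_energy T C \<tau> (T \<eta> x)"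
proof -
  define I where "I \<sigma> = {t::real. 0 \<le> t \<and> ennreal t < \<sigma>}" for \<sigma>
  define J where "J = {t::real. \<eta> \<le> t \<and> ennreal t < \<tau>}"
  have [measurable]: "I \<sigma> \<in> sets borel" "J \<in> sets borel" for \<sigma>
    unfolding I_def J_def by measurable
  have [measurable]: "energy_density x \<in> borel_measurable borel" using x by measurable
  have "obs_energy T C \<tau> x
      \<le> (\<integral>\<^sup>+ t. energy_density x t * indicator (I \<eta>) t + energy_density x t * indicator J t \<partial>lborel)"
    unfolding obs_energy_eq_density I_def[symmetric]
    by (intro nn_integral_mono)
       (auto simp: I_def J_def indicator_def not_le intro: ennreal_lessI order.strict_trans)
  also have "\<dots> = obs_energy T C (ennreal \<eta>) x + (\<integral>\<^sup>+ t. energy_density x t * indicator J t \<partial>lborel)"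
    unfolding obs_energy_eq_density I_def by (rule nn_integral_add) measurable
  also have "(\<integral>\<^sup>+ t. energy_density x t * indicator J t \<partial>lborel)
      = (\<integral>\<^sup>+ s. energy_density x (\<eta> + s) * indicator J (\<eta> + s) \<partial>lborel)"
    using nn_integral_real_affine[of "\<lambda>t. energy_density x t * indicator J t" 1 \<eta>] by simp
  also have "\<dots> \<le> obs_energy T C \<tau> (T \<eta> x)"
    unfolding obs_energy_eq_density
  proof (intro nn_integral_mono)
    fix s :: real
    show "energy_density x (\<eta> + s) * indicator J (\<eta> + s)
        \<le> energy_density (T \<eta> x) s * indicator {t. 0 \<le> t \<and> ennreal t < \<tau>} s"
    proof (cases "\<eta> + s \<in> J")
      case True
      then have s: "0 \<le> s" "ennreal s < \<tau>"
        using \<eta> by (auto simp: J_def intro: order.strict_trans1[rotated] ennreal_leI)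
      moreover have "T (max 0 (\<eta> + s)) x = T (max 0 s) (T \<eta> x)"
        using s \<eta> T_add[of s \<eta> x] by (simp add: max_def add.commute)
      ultimately show ?thesis using True by (simp add: energy_density_def)
    qed simp
  qed
  finally show ?thesis by (simp add: add_mono)
qed

lemma m2_le_M2_plus_M2:
  assumes x: "x \<in> D" "norm x = 1" and \<eta>: "\<eta> > 0"
  shows "m2 T D C \<tau> \<le> M2 T D C (ennreal \<eta>) + M2 T D C \<tau> * ennreal ((norm (T \<eta> x))\<^sup>2)"
proof -
  have "m2 T D C \<tau> \<le> obs_energy T C \<tau> x" unfolding m2_def by (rule INF_lower) (use x in auto)
  also have "\<dots> \<le> obs_energy T C (ennreal \<eta>) x + obs_energy T C \<tau> (T \<eta> x)"
    by (rule obs_energy_split[OF x(1) \<eta>])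
  also have "\<dots> \<le> M2 T D C (ennreal \<eta>) + M2 T D C \<tau> * ennreal ((norm (T \<eta> x))\<^sup>2)"
  proof (rule add_mono)
    show "obs_energy T C (ennreal \<eta>) x \<le> M2 T D C (ennreal \<eta>)"
      unfolding M2_def by (rule SUP_upper) (use x in auto)
    show "obs_energy T C \<tau> (T \<eta> x) \<le> M2 T D C \<tau> * ennreal ((norm (T \<eta> x))\<^sup>2)"
      using \<eta> by (intro obs_energy_le_M2 domain_T x) auto
  qed
  finally show ?thesis .
qed

lemma BFC_system_lower_bound:
  assumes "BFC_system T D C"
  shows "\<exists>\<eta>>0. \<exists>c>0. \<forall>x\<in>D. norm x = 1 \<longrightarrow> c \<le> norm (T \<eta> x)"
proof -
  obtain \<eta> :: real and \<tau> where \<eta>: "0 < \<eta>" and adm: "M2 T D C \<tau> < \<infinity>"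
    and gap: "M2 T D C (ennreal \<eta>) < m2 T D C \<tau>"
    using assms unfolding BFC_system_def admissible_in_def by blast
  obtain c where c: "c > 0" and
    c_le: "\<And>s. 0 \<le> s \<Longrightarrow> m2 T D C \<tau> \<le> M2 T D C (ennreal \<eta>) + M2 T D C \<tau> * ennreal s \<Longrightarrow> c \<le> s"
    using ennreal_gap_lower_bound[OF gap adm] by blast
  have "sqrt c \<le> norm (T \<eta> x)" if "x \<in> D" "norm x = 1" for x
    using c_le[OF zero_le_power2 m2_le_M2_plus_M2[OF that \<eta>]] real_sqrt_le_mono by fastforce
  then show ?thesis using \<eta> c by (metis real_sqrt_gt_zero)
qed

end


theorem corollary3p4:
  fixes scX :: "complex \<Rightarrow> 'x::banach \<Rightarrow> 'x"
    and scY :: "complex \<Rightarrow> 'y::banach \<Rightarrow> 'y"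
    and T :: "real \<Rightarrow> 'x \<Rightarrow> 'x"
    and D :: "'x set"
    and A :: "'x \<Rightarrow> 'x"
    and C :: "'x \<Rightarrow> 'y"
  assumes "complex_structure scX" and "complex_structure scY"
    and "C0_semigroup scX T"
    and "minus_generator T D A"
    and "\<forall>x\<in>D. \<forall>y\<in>D. C (x + y) = C x + C y"
    and "\<forall>a. \<forall>x\<in>D. C (scX a x) = scY a (C x)"
    and "\<exists>K. \<forall>x\<in>D. norm (C x) \<le> K * (norm x + norm (A x))"
    and "admissible T D C"
    and "BFC_system T D C"
  shows "bounded (Re ` frontier (op_spectrum scX D A))"
proof -
  have "C (r *\<^sub>R x) = r *\<^sub>R C x" if "x \<in> D" for r x
    using assms(1,2,6) that by (metis complex_space.intro complex_space.sc_of_real)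
  then interpret observed_system scX T D A C
    using assms by unfold_locales auto
  obtain \<eta> c where \<eta>: "\<eta> > 0" and c: "c > 0"
    and lower: "\<And>x. x \<in> D \<Longrightarrow> norm x = 1 \<Longrightarrow> c \<le> norm (T \<eta> x)"
    using BFC_system_lower_bound[OF assms(9)] by blast
  obtain r where "\<forall>l\<in>frontier (op_spectrum scX D A). r \<le> Re l"
    using frontier_spectrum_Re_lower_bound by blast
  with frontier_spectrum_Re_upper_bound[OF \<eta> c lower]
  have "Re ` frontier (op_spectrum scX D A) \<subseteq> {r .. - ln c / \<eta>}" by auto
  then show ?thesis by (rule bounded_subset[OF bounded_closed_interval])
qed

end
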